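(* Let $M$ be an $n$-quasi-paving matroid of rank $n$ on $[d]$. Then $M$ is realizable over $\mathbb{C}$, and its matroid variety $V_M\subseteq\mathbb{C}^{nd}$ is irreducible.
   Context: Quasi-paving construction: given a positive integer $n\le d$ and a collection $\mathcal{H}=\{H_1,\ldots,H_k\}$ of subsets of $[d]$ any three of which have empty intersection, the $n$-quasi-paving matroid with representation $\mathcal{H}$ is the matroid on $[d]$ whose circuits are: (Type 1) the $(n-1)$-element subsets contained in the intersection of two distinct members of $\mathcal{H}$; (Type 2) the $n$-element subsets of some $H_i$ containing no Type 1 set; (Type 3) the $(n+1)$-element subsets containing no Type 1 or Type 2 set. A realization of a rank-$n$ matroid $M$ on $[d]$ is a tuple $(\gamma_1,\ldots,\gamma_d)$ of vectors in $\mathbb{C}^n$ (identified with a point of $\mathbb{C}^{nd}$) such that a set $\{i_1,\ldots,i_p\}$ is dependent in $M$ iff $\gamma_{i_1},\ldots,\gamma_{i_p}$ are linearly dependent; $\Gamma_M$ is the set of realizations and the matroid variety $V_M$ is its Zariski closure in $\mathbb{C}^{nd}$. $M$ is realizable if $\Gamma_M\neq\emptyset$. *)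

theory Defs
  imports Complex_Main
begin

definition qp_rep :: "nat \<Rightarrow> nat set set \<Rightarrow> bool" where
  "qp_rep d H \<longleftrightarrow> finite H \<and> (\<forall>A\<in>H. A \<subseteq> {1..d}) \<and>
     (\<forall>A\<in>H. \<forall>B\<in>H. \<forall>C\<in>H. A \<noteq> B \<and> B \<noteq> C \<and> A \<noteq> C \<longrightarrow> A \<inter> B \<inter> C = {})"

definition qp_type1 :: "nat \<Rightarrow> nat set set \<Rightarrow> nat set \<Rightarrow> bool" where
  "qp_type1 n H C \<longleftrightarrow> finite C \<and> card C = n - 1 \<and>
     (\<exists>A\<in>H. \<exists>B\<in>H. A \<noteq> B \<and> C \<subseteq> A \<inter> B)"

definition qp_type2 :: "nat \<Rightarrow> nat set set \<Rightarrow> nat set \<Rightarrow> bool" where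
  "qp_type2 n H C \<longleftrightarrow> finite C \<and> card C = n \<and> (\<exists>A\<in>H. C \<subseteq> A) \<and>
     \<not> (\<exists>D\<subseteq>C. qp_type1 n H D)"

definition qp_type3 :: "nat \<Rightarrow> nat \<Rightarrow> nat set set \<Rightarrow> nat set \<Rightarrow> bool" where
  "qp_type3 n d H C \<longleftrightarrow> C \<subseteq> {1..d} \<and> card C = n + 1 \<and>
     \<not> (\<exists>D\<subseteq>C. qp_type1 n H D \<or> qp_type2 n H D)"

definition qp_circuit :: "nat \<Rightarrow> nat \<Rightarrow> nat set set \<Rightarrow> nat set \<Rightarrow> bool" where
  "qp_circuit n d H C \<longleftrightarrow> qp_type1 n H C \<or> qp_type2 n H C \<or> qp_type3 n d H C"

definition qp_dependent :: "nat \<Rightarrow> nat \<Rightarrow> nat set set \<Rightarrow> nat set \<Rightarrow> bool" where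
  "qp_dependent n d H S \<longleftrightarrow> (\<exists>C\<subseteq>S. qp_circuit n d H C)"

definition circuit_matroid :: "'a set \<Rightarrow> ('a set \<Rightarrow> bool) \<Rightarrow> bool" where
  "circuit_matroid E circ \<longleftrightarrow> finite E \<and> (\<forall>C. circ C \<longrightarrow> C \<subseteq> E) \<and> \<not> circ {} \<and>
     (\<forall>C1 C2. circ C1 \<and> circ C2 \<and> C1 \<subseteq> C2 \<longrightarrow> C1 = C2) \<and>
     (\<forall>C1 C2 e. circ C1 \<and> circ C2 \<and> C1 \<noteq> C2 \<and> e \<in> C1 \<inter> C2 \<longrightarrow>
        (\<exists>C3. circ C3 \<and> C3 \<subseteq> (C1 \<union> C2) - {e}))"

definition circuit_rank :: "'a set \<Rightarrow> ('a set \<Rightarrow> bool) \<Rightarrow> nat" where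
  "circuit_rank E circ = Max {card I | I. I \<subseteq> E \<and> \<not> (\<exists>C\<subseteq>I. circ C)}"

definition qp_matroid_rank_n :: "nat \<Rightarrow> nat \<Rightarrow> nat set set \<Rightarrow> bool" where
  "qp_matroid_rank_n n d H \<longleftrightarrow> circuit_matroid {1..d} (qp_circuit n d H) \<and>
     circuit_rank {1..d} (qp_circuit n d H) = n"

text \<open>A point of C^{nd} is a function x :: nat \<times> nat \<Rightarrow> complex vanishing outside
  the index set I = {1..d} \<times> {0..<n}; x (i,j) is the j-th coordinate of the vector gamma_i.\<close>
definition idx :: "nat \<Rightarrow> nat \<Rightarrow> (nat \<times> nat) set" where
  "idx n d = {1..d} \<times> {0..<n}"

definition cspace :: "(nat \<times> nat) set \<Rightarrow> ((nat \<times> nat) \<Rightarrow> complex) set" where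
  "cspace I = {x. \<forall>k. k \<notin> I \<longrightarrow> x k = 0}"

definition lin_dep_family :: "nat \<Rightarrow> ((nat \<times> nat) \<Rightarrow> complex) \<Rightarrow> nat set \<Rightarrow> bool" where
  "lin_dep_family n x S \<longleftrightarrow>
     (\<exists>c :: nat \<Rightarrow> complex. (\<exists>i\<in>S. c i \<noteq> 0) \<and> (\<forall>j<n. (\<Sum>i\<in>S. c i * x (i, j)) = 0))"

definition qp_realizations :: "nat \<Rightarrow> nat \<Rightarrow> nat set set \<Rightarrow> ((nat \<times> nat) \<Rightarrow> complex) set" where
  "qp_realizations n d H = {x \<in> cspace (idx n d).
     \<forall>S\<subseteq>{1..d}. qp_dependent n d H S \<longleftrightarrow> lin_dep_family n x S}"

inductive_set poly_funs :: "(nat \<times> nat) set \<Rightarrow> (((nat \<times> nat) \<Rightarrow> complex) \<Rightarrow> complex) set"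
  for I where
  pconst: "(\<lambda>x. c) \<in> poly_funs I"
| pvar: "k \<in> I \<Longrightarrow> (\<lambda>x. x k) \<in> poly_funs I"
| padd: "p \<in> poly_funs I \<Longrightarrow> q \<in> poly_funs I \<Longrightarrow> (\<lambda>x. p x + q x) \<in> poly_funs I"
| pmult: "p \<in> poly_funs I \<Longrightarrow> q \<in> poly_funs I \<Longrightarrow> (\<lambda>x. p x * q x) \<in> poly_funs I"

definition zariski_closed :: "(nat \<times> nat) set \<Rightarrow> ((nat \<times> nat) \<Rightarrow> complex) set \<Rightarrow> bool" where
  "zariski_closed I V \<longleftrightarrow> (\<exists>P \<subseteq> poly_funs I. V = {x \<in> cspace I. \<forall>p\<in>P. p x = 0})"

definition zariski_closure :: "(nat \<times> nat) set \<Rightarrow> ((nat \<times> nat) \<Rightarrow> complex) set \<Rightarrow> ((nat \<times> nat) \<Rightarrow> complex) set" where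
  "zariski_closure I S = {x \<in> cspace I. \<forall>p\<in>poly_funs I. (\<forall>y\<in>S. p y = 0) \<longrightarrow> p x = 0}"

definition zariski_irreducible :: "(nat \<times> nat) set \<Rightarrow> ((nat \<times> nat) \<Rightarrow> complex) set \<Rightarrow> bool" where
  "zariski_irreducible I V \<longleftrightarrow> V \<noteq> {} \<and>
     (\<forall>A B. zariski_closed I A \<and> zariski_closed I B \<and> V \<subseteq> A \<union> B \<longrightarrow> V \<subseteq> A \<or> V \<subseteq> B)"

definition matroid_variety :: "nat \<Rightarrow> nat \<Rightarrow> nat set set \<Rightarrow> ((nat \<times> nat) \<Rightarrow> complex) set" where
  "matroid_variety n d H = zariski_closure (idx n d) (qp_realizations n d H)"

end

(*
  Parametrize families of vectors in C^n by a normal h_A and an anchor a_A for every block A of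
  the representation, and by a point z_e and a second anchor c_e for every element e.
  Projecting z_e into the hyperplanes orthogonal to h_A for the at most two blocks A containing e
  yields vectors gamma_e that depend polynomially on the parameters. For generic parameters gamma
  is a realization: circuits of type 1 and 2 lie in subspaces of codimension 2 and 1, while the
  independent sets stay independent. Conversely every realization is gamma of a generic
  parameter, since normals to the spans of the blocks can be chosen pairwise independent (this is
  where the exchange property of the blocks enters). Genericity fails at only finitely many points
  of a line through a generic parameter, so two polynomials that do not vanish on all realizations
  have a common non-zero among them: the Zariski closure is irreducible.
*)

theory Submission
  imports Defs "HOL-Computational_Algebra.Polynomial"
begin

section \<open>Linear dependence of families of vectors\<close>

definition lin_dependent :: "'j set \<Rightarrow> ('i \<Rightarrow> 'j \<Rightarrow> 'a::field) \<Rightarrow> 'i set \<Rightarrow> bool" where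
  "lin_dependent J v S \<longleftrightarrow> (\<exists>c. (\<exists>i\<in>S. c i \<noteq> 0) \<and> (\<forall>j\<in>J. (\<Sum>i\<in>S. c i * v i j) = 0))"

lemma lin_dependent_mono:
  assumes "lin_dependent J v S" "S \<subseteq> T" "finite T"
  shows "lin_dependent J v T"
proof -
  obtain c where c: "\<exists>i\<in>S. c i \<noteq> 0" "\<forall>j\<in>J. (\<Sum>i\<in>S. c i * v i j) = 0"
    using assms(1) unfolding lin_dependent_def by blast
  define c' where "c' i = (if i \<in> S then c i else 0)" for i
  have "(\<Sum>i\<in>T. c' i * v i j) = (\<Sum>i\<in>S. c' i * v i j)" for j
    using assms(2,3) by (intro sum.mono_neutral_right) (auto simp: c'_def)
  then have "(\<Sum>i\<in>T. c' i * v i j) = (\<Sum>i\<in>S. c i * v i j)" for j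
    by (simp add: c'_def)
  then show ?thesis
    unfolding lin_dependent_def using c assms(2) by (intro exI[of _ c']) (auto simp: c'_def)
qed

lemma lin_dependent_cong:
  assumes "\<And>i j. i \<in> S \<Longrightarrow> j \<in> J \<Longrightarrow> v i j = w i j"
  shows "lin_dependent J v S \<longleftrightarrow> lin_dependent J w S"
proof -
  have "(\<Sum>i\<in>S. c i * v i j) = (\<Sum>i\<in>S. c i * w i j)" if "j \<in> J" for c j
    using assms that by (intro sum.cong) auto
  then show ?thesis unfolding lin_dependent_def by auto
qed

lemma lin_dependent_zero_vector:
  assumes "i0 \<in> S" "finite S" "\<forall>j\<in>J. v i0 j = 0"
  shows "lin_dependent J v S"
  unfolding lin_dependent_def using assms
  by (intro exI[of _ "\<lambda>i. of_bool (i = i0)"]) (auto simp: Int_def)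

definition eliminate :: "('i \<Rightarrow> 'j \<Rightarrow> 'a::field) \<Rightarrow> 'i \<Rightarrow> 'j \<Rightarrow> 'i \<Rightarrow> 'j \<Rightarrow> 'a" where
  "eliminate v i0 j0 = (\<lambda>i j. v i0 j0 * v i j - v i j0 * v i0 j)"

lemma eliminate_pivot_column [simp]: "eliminate v i0 j0 i j0 = 0"
  unfolding eliminate_def by (simp add: mult.commute)

lemma sum_eliminate:
  "(\<Sum>i\<in>S. c i * eliminate v i0 j0 i j) =
     v i0 j0 * (\<Sum>i\<in>S. c i * v i j) - (\<Sum>i\<in>S. c i * v i j0) * v i0 j"
  unfolding eliminate_def
  by (simp add: sum_subtractf sum_distrib_left sum_distrib_right algebra_simps)

lemma lin_dependent_insert_eliminate:
  assumes "finite S" "i0 \<notin> S" "j0 \<in> J" "v i0 j0 \<noteq> 0"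
  shows "lin_dependent J v (insert i0 S) \<longleftrightarrow> lin_dependent J (eliminate v i0 j0) S"
proof
  assume "lin_dependent J v (insert i0 S)"
  then obtain c where c: "\<exists>i\<in>insert i0 S. c i \<noteq> 0" "\<forall>j\<in>J. (\<Sum>i\<in>insert i0 S. c i * v i j) = 0"
    unfolding lin_dependent_def by blast
  have rest: "(\<Sum>i\<in>S. c i * v i j) = - c i0 * v i0 j" if "j \<in> J" for j
    using c(2) that assms(1,2) by (simp add: add_eq_0_iff)
  have "\<exists>i\<in>S. c i \<noteq> 0"
  proof (rule ccontr)
    assume zero: "\<not> (\<exists>i\<in>S. c i \<noteq> 0)"
    then have "c i0 * v i0 j0 = 0" using rest[OF assms(3)] by simp
    then show False using c(1) assms(4) zero by auto
  qed
  moreover have "(\<Sum>i\<in>S. c i * eliminate v i0 j0 i j) = 0" if "j \<in> J" for j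
    unfolding sum_eliminate rest[OF that] rest[OF assms(3)] by (simp add: algebra_simps)
  ultimately show "lin_dependent J (eliminate v i0 j0) S"
    unfolding lin_dependent_def by blast
next
  assume "lin_dependent J (eliminate v i0 j0) S"
  then obtain c where c: "\<exists>i\<in>S. c i \<noteq> 0" "\<forall>j\<in>J. (\<Sum>i\<in>S. c i * eliminate v i0 j0 i j) = 0"
    unfolding lin_dependent_def by blast
  define c' where "c' i = (if i = i0 then - (\<Sum>i\<in>S. c i * v i j0) else v i0 j0 * c i)" for i
  have "(\<Sum>i\<in>insert i0 S. c' i * v i j) = (\<Sum>i\<in>S. c i * eliminate v i0 j0 i j)" for j
  proof -
    have "(\<Sum>i\<in>S. c' i * v i j) = (\<Sum>i\<in>S. v i0 j0 * (c i * v i j))"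
      using assms(2) by (intro sum.cong) (auto simp: c'_def)
    then have "(\<Sum>i\<in>insert i0 S. c' i * v i j)
        = - (\<Sum>i\<in>S. c i * v i j0) * v i0 j + v i0 j0 * (\<Sum>i\<in>S. c i * v i j)"
      using assms(1,2) by (simp add: c'_def sum_distrib_left)
    then show ?thesis by (simp add: sum_eliminate)
  qed
  then have "\<forall>j\<in>J. (\<Sum>i\<in>insert i0 S. c' i * v i j) = 0" using c(2) by simp
  moreover have "\<exists>i\<in>insert i0 S. c' i \<noteq> 0"
  proof -
    obtain i where "i \<in> S" "c i \<noteq> 0" using c(1) by blast
    then show ?thesis using assms(2,4) by (intro bexI[of _ i]) (auto simp: c'_def)
  qed
  ultimately show "lin_dependent J v (insert i0 S)"
    unfolding lin_dependent_def by blast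
qed

lemma lin_dependent_card_gt:
  assumes "finite J" "finite S" "card J < card S"
  shows "lin_dependent J v S"
  using assms(2,1,3)
proof (induction S arbitrary: J v rule: finite_induct)
  case empty
  then show ?case by simp
next
  case (insert i0 S)
  show ?case
  proof (cases "\<forall>j\<in>J. v i0 j = 0")
    case True
    then show ?thesis using insert.hyps by (intro lin_dependent_zero_vector) auto
  next
    case False
    then obtain j0 where j0: "j0 \<in> J" "v i0 j0 \<noteq> 0" by blast
    have "card J > 0" using j0 insert.prems(1) by (auto simp: card_gt_0_iff)
    then have "card (J - {j0}) < card S" using insert.hyps insert.prems j0 by simp
    then have "lin_dependent (J - {j0}) (eliminate v i0 j0) S"
      using insert.IH insert.prems(1) by blast
    then obtain c where "\<exists>i\<in>S. c i \<noteq> 0"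
      "\<forall>j\<in>J - {j0}. (\<Sum>i\<in>S. c i * eliminate v i0 j0 i j) = 0"
      unfolding lin_dependent_def by blast
    then have "lin_dependent J (eliminate v i0 j0) S"
      unfolding lin_dependent_def by (intro exI[of _ c]) auto
    then show ?thesis using lin_dependent_insert_eliminate[of S i0 j0 J v] insert.hyps j0 by blast
  qed
qed

definition dot :: "nat \<Rightarrow> (nat \<Rightarrow> 'a::field) \<Rightarrow> (nat \<Rightarrow> 'a) \<Rightarrow> 'a" where
  "dot n h v = (\<Sum>j<n. h j * v j)"

definition nonzero_vec :: "nat \<Rightarrow> (nat \<Rightarrow> 'a::field) \<Rightarrow> bool" where
  "nonzero_vec n h \<longleftrightarrow> (\<exists>k<n. h k \<noteq> 0)"

definition indep_pair :: "nat \<Rightarrow> (nat \<Rightarrow> 'a::field) \<Rightarrow> (nat \<Rightarrow> 'a) \<Rightarrow> bool" where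
  "indep_pair n h g \<longleftrightarrow> (\<exists>k<n. \<exists>l<n. h k * g l - h l * g k \<noteq> 0)"

lemma dot_sum: "dot n h (\<lambda>j. \<Sum>i\<in>S. c i * v i j) = (\<Sum>i\<in>S. c i * dot n h (v i))"
  unfolding dot_def
  by (simp add: sum_distrib_left mult.left_commute sum.swap[of _ S])

lemma dot_diff_scale: "dot n g (\<lambda>j. a * u j - b * v j) = a * dot n g u - b * dot n g v"
  unfolding dot_def by (simp add: sum_subtractf sum_distrib_left algebra_simps)

lemma indep_pair_commute: "indep_pair n h g \<longleftrightarrow> indep_pair n g h"
  unfolding indep_pair_def by (auto simp: mult.commute)

lemma dot_scale:
  assumes "\<And>j. j < n \<Longrightarrow> u j = a * w j"
  shows "dot n u x = a * dot n w x"
  unfolding dot_def using assms by (simp add: sum_distrib_left mult.assoc)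

lemma dot_affine: "dot n (\<lambda>j. a j + t * (b j - a j)) x = dot n a x + t * (dot n b x - dot n a x)"
  unfolding dot_def by (simp add: algebra_simps sum.distrib sum_subtractf sum_distrib_left)

lemma dot_unit_vector:
  assumes "k < n"
  shows "dot n h (\<lambda>j. of_bool (j = k)) = h k"
proof -
  have "{..<n} \<inter> {j. j = k} = {k}" using assms by auto
  then show ?thesis unfolding dot_def by simp
qed

lemma not_indep_pair_scale:
  assumes "nonzero_vec n w" "\<not> indep_pair n u w"
  obtains a where "\<And>j. j < n \<Longrightarrow> u j = a * w j"
proof -
  obtain m where m: "m < n" "w m \<noteq> 0" using assms(1) unfolding nonzero_vec_def by blast
  have "u j = u m / w m * w j" if "j < n" for j
  proof -
    have "u j * w m - u m * w j = 0" using assms(2) m(1) that unfolding indep_pair_def by blast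
    then show ?thesis using m(2) by (simp add: field_simps)
  qed
  then show ?thesis by (rule that)
qed

lemma indep_pair_with_nonzero:
  assumes "indep_pair n u1 u2" "nonzero_vec n w"
  shows "indep_pair n u1 w \<or> indep_pair n u2 w"
proof (rule ccontr)
  assume "\<not> ?thesis"
  then obtain a b where "\<And>j. j < n \<Longrightarrow> u1 j = a * w j" "\<And>j. j < n \<Longrightarrow> u2 j = b * w j"
    using not_indep_pair_scale[OF assms(2)] by metis
  then have "u1 k * u2 l - u1 l * u2 k = 0" if "k < n" "l < n" for k l
    using that by (simp add: algebra_simps)
  then show False using assms(1) unfolding indep_pair_def by blast
qed

lemma lin_dependent_in_hyperplane:
  assumes "finite S" "n \<le> card S" "nonzero_vec n h" "\<forall>i\<in>S. dot n h (v i) = 0"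
  shows "lin_dependent {..<n} v S"
proof -
  obtain k where k: "k < n" "h k \<noteq> 0" using assms(3) unfolding nonzero_vec_def by blast
  have "card ({..<n} - {k}) < card S" using k assms(2) by simp
  then obtain c where c: "\<exists>i\<in>S. c i \<noteq> 0" "\<forall>j\<in>{..<n} - {k}. (\<Sum>i\<in>S. c i * v i j) = 0"
    using lin_dependent_card_gt[of "{..<n} - {k}" S v] assms(1) unfolding lin_dependent_def by auto
  define s where "s = (\<lambda>j. \<Sum>i\<in>S. c i * v i j)"
  have "dot n h s = 0" using assms(4) by (simp add: s_def dot_sum)
  moreover have "dot n h s = h k * s k"
    unfolding dot_def using k c(2) by (simp add: sum.remove s_def)
  ultimately have "\<forall>j<n. s j = 0" using k c(2) unfolding s_def by auto
  then show ?thesis unfolding lin_dependent_def s_def using c(1) by blast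
qed

lemma lin_dependent_in_two_hyperplanes:
  assumes "finite S" "n \<le> card S + 1" "indep_pair n h g"
    "\<forall>i\<in>S. dot n h (v i) = 0" "\<forall>i\<in>S. dot n g (v i) = 0"
  shows "lin_dependent {..<n} v S"
proof -
  obtain k l where kl: "k < n" "l < n" "h k * g l - h l * g k \<noteq> 0"
    using assms(3) unfolding indep_pair_def by blast
  then have "k \<noteq> l" by auto
  then have "card ({..<n} - {k, l}) < card S" using kl assms(2) by simp
  then obtain c where c: "\<exists>i\<in>S. c i \<noteq> 0" "\<forall>j\<in>{..<n} - {k, l}. (\<Sum>i\<in>S. c i * v i j) = 0"
    using lin_dependent_card_gt[of "{..<n} - {k, l}" S v] assms(1) unfolding lin_dependent_def by auto
  define s where "s = (\<lambda>j. \<Sum>i\<in>S. c i * v i j)"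
  have two_terms: "dot n w s = w k * s k + w l * s l" for w
  proof -
    have "dot n w s = (\<Sum>j\<in>{k, l}. w j * s j)"
      unfolding dot_def using kl c(2) by (intro sum.mono_neutral_right) (auto simp: s_def)
    then show ?thesis using \<open>k \<noteq> l\<close> by simp
  qed
  have "dot n h s = 0" "dot n g s = 0" using assms(4,5) by (simp_all add: s_def dot_sum)
  then have h0: "h k * s k + h l * s l = 0" and g0: "g k * s k + g l * s l = 0"
    using two_terms by simp_all
  have "(h k * g l - h l * g k) * s k = g l * (h k * s k + h l * s l) - h l * (g k * s k + g l * s l)"
    "(h k * g l - h l * g k) * s l = h k * (g k * s k + g l * s l) - g k * (h k * s k + h l * s l)"
    by (simp_all add: algebra_simps)
  then have "(h k * g l - h l * g k) * s k = 0" "(h k * g l - h l * g k) * s l = 0"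
    unfolding h0 g0 by simp_all
  then have "\<forall>j<n. s j = 0" using kl c(2) unfolding s_def by auto
  then show ?thesis unfolding lin_dependent_def s_def using c(1) by blast
qed

lemma exists_normal:
  assumes "finite I" "card I < n"
  obtains h where "nonzero_vec n h" "\<forall>i\<in>I. dot n h (v i) = 0"
  using lin_dependent_card_gt[of I "{..<n}" "\<lambda>j i. v i j"] assms that
  unfolding lin_dependent_def nonzero_vec_def dot_def by (auto simp: mult.commute)

lemma exists_indep_normals:
  assumes "finite I" "card I + 1 < n"
  obtains h g where "indep_pair n h g" "\<forall>i\<in>I. dot n h (v i) = 0 \<and> dot n g (v i) = 0"
proof -
  obtain h where h: "nonzero_vec n h" "\<forall>i\<in>I. dot n h (v i) = 0"
    using exists_normal[of I n v] assms by auto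
  obtain k where k: "k < n" "h k \<noteq> 0" using h(1) unfolding nonzero_vec_def by blast
  \<comment> \<open>a normal that is also orthogonal to the k-th unit vector cannot be parallel to h\<close>
  define w where "w i = (case i of None \<Rightarrow> (\<lambda>j. of_bool (j = k)) | Some i \<Rightarrow> v i)" for i
  have "card (insert None (Some ` I)) < n"
    using assms by (simp add: card_image)
  then obtain g where g: "nonzero_vec n g" "\<forall>i\<in>insert None (Some ` I). dot n g (w i) = 0"
    using exists_normal[of "insert None (Some ` I)" n w] assms(1) by auto
  have "g k = 0" using g(2) k(1) by (simp add: w_def dot_def)
  moreover obtain l where "l < n" "g l \<noteq> 0" using g(1) unfolding nonzero_vec_def by blast
  ultimately have "indep_pair n h g" unfolding indep_pair_def using k by (intro exI[of _ k] exI[of _ l]) auto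
  moreover have "\<forall>i\<in>I. dot n g (v i) = 0" using g(2) by (simp add: w_def)
  ultimately show ?thesis using h(2) that by blast
qed

lemma exists_normal_indep_of:
  assumes "finite I" "card I + 1 < n" "nonzero_vec n w"
  obtains u where "indep_pair n u w" "\<forall>i\<in>I. dot n u (v i) = 0"
proof -
  obtain h g where "indep_pair n h g" "\<forall>i\<in>I. dot n h (v i) = 0 \<and> dot n g (v i) = 0"
    using exists_indep_normals[OF assms(1,2)] by blast
  then show ?thesis using indep_pair_with_nonzero[OF _ assms(3)] that by blast
qed

lemma exists_unit_dot:
  assumes "nonzero_vec n h"
  obtains a where "dot n h a = 1"
proof -
  obtain k where k: "k < n" "h k \<noteq> 0" using assms unfolding nonzero_vec_def by blast
  have "dot n h (\<lambda>j. of_bool (j = k) / h k) = (\<Sum>j<n. of_bool (j = k))"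
    unfolding dot_def using k(2) by (intro sum.cong) auto
  then have "dot n h (\<lambda>j. of_bool (j = k) / h k) = 1" using k(1) by simp
  then show ?thesis by (rule that)
qed

lemma exists_dual_vector:
  assumes "indep_pair n h g"
  obtains c where "dot n h c = 0" "dot n g c = 1"
proof -
  obtain k l where kl: "k < n" "l < n" "h k * g l - h l * g k \<noteq> 0"
    using assms unfolding indep_pair_def by blast
  define m where "m = h k * g l - h l * g k"
  define c where "c j = ((if j = l then h k else 0) - (if j = k then h l else 0)) / m" for j
  have "dot n w c = (w l * h k - w k * h l) / m" for w
  proof -
    have "dot n w c = (\<Sum>j<n. (if j = l then w l * h k / m else 0) - (if j = k then w k * h l / m else 0))"
      unfolding dot_def c_def by (intro sum.cong) (auto simp: field_simps)
    then show ?thesis using kl by (simp add: sum_subtractf diff_divide_distrib)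
  qed
  then have "dot n h c = 0" "dot n g c = 1" using kl(3) by (simp_all add: m_def mult.commute)
  then show ?thesis by (rule that)
qed

lemma dot_zero_if_dependent_insert:
  assumes "finite I" "\<not> lin_dependent {..<n} v I" "lin_dependent {..<n} v (insert e I)"
    "\<forall>i\<in>I. dot n h (v i) = 0"
  shows "dot n h (v e) = 0"
proof (cases "e \<in> I")
  case True
  then show ?thesis using assms(4) by blast
next
  case False
  obtain c where c: "\<exists>i\<in>insert e I. c i \<noteq> 0" "\<forall>j<n. (\<Sum>i\<in>insert e I. c i * v i j) = 0"
    using assms(3) unfolding lin_dependent_def by auto
  have "c e \<noteq> 0"
  proof
    assume "c e = 0"
    then have "lin_dependent {..<n} v I"
      using c False assms(1) unfolding lin_dependent_def by (intro exI[of _ c]) auto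
    then show False using assms(2) by blast
  qed
  have "(\<Sum>i\<in>insert e I. c i * dot n h (v i)) = 0"
    unfolding dot_sum[symmetric] using c(2) by (simp add: dot_def)
  then have "c e * dot n h (v e) = 0" using False assms(1,4) by simp
  then show ?thesis using \<open>c e \<noteq> 0\<close> by simp
qed

lemma exists_spanning_independent_subset:
  assumes "finite A"
  obtains I where "I \<subseteq> A" "\<not> lin_dependent {..<n} v I"
    "\<And>h. \<forall>i\<in>I. dot n h (v i) = 0 \<Longrightarrow> \<forall>e\<in>A. dot n h (v e) = 0"
  using assms
proof (induction A arbitrary: thesis rule: finite_induct)
  case empty
  show ?case by (rule empty.prems[of "{}"]) (auto simp: lin_dependent_def)
next
  case (insert e A)
  obtain I where I: "I \<subseteq> A" "\<not> lin_dependent {..<n} v I"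
    "\<And>h. \<forall>i\<in>I. dot n h (v i) = 0 \<Longrightarrow> \<forall>e\<in>A. dot n h (v e) = 0"
    using insert.IH by blast
  have "finite I" using I(1) insert.hyps(1) by (rule finite_subset)
  show ?case
  proof (cases "lin_dependent {..<n} v (insert e I)")
    case True
    have "\<forall>e'\<in>insert e A. dot n h (v e') = 0" if "\<forall>i\<in>I. dot n h (v i) = 0" for h
      using I(3)[OF that] dot_zero_if_dependent_insert[OF \<open>finite I\<close> I(2) True that] by simp
    then show ?thesis using insert.prems[of I] I(1,2) by blast
  next
    case False
    have "\<forall>e'\<in>insert e A. dot n h (v e') = 0" if "\<forall>i\<in>insert e I. dot n h (v i) = 0" for h
      using I(3)[of h] that by blast
    moreover have "insert e I \<subseteq> insert e A" using I(1) by blast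
    ultimately show ?thesis using insert.prems[of "insert e I"] False by blast
  qed
qed

lemma unit_vectors_independent:
  assumes "finite S" "inj_on sg S" "sg ` S \<subseteq> J"
  shows "\<not> lin_dependent J (\<lambda>i j. of_bool (j = sg i) :: 'a::field) S"
proof
  assume "lin_dependent J (\<lambda>i j. of_bool (j = sg i) :: 'a) S"
  then obtain c :: "_ \<Rightarrow> 'a" where c: "\<exists>i\<in>S. c i \<noteq> 0" "\<forall>j\<in>J. (\<Sum>i\<in>S. c i * of_bool (j = sg i)) = 0"
    unfolding lin_dependent_def by blast
  then obtain i0 where i0: "i0 \<in> S" "c i0 \<noteq> 0" by blast
  have "S \<inter> {i. sg i0 = sg i} = {i0}" using assms(2) i0(1) by (auto dest: inj_onD)
  then have "(\<Sum>i\<in>S. c i * of_bool (sg i0 = sg i)) = c i0" using assms(1) by simp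
  then show False using c(2) i0 assms(3) by auto
qed

section \<open>Polynomial functions along lines\<close>

definition line :: "('l \<Rightarrow> 'j \<Rightarrow> 'a::field) \<Rightarrow> ('l \<Rightarrow> 'j \<Rightarrow> 'a) \<Rightarrow> 'a \<Rightarrow> 'l \<Rightarrow> 'j \<Rightarrow> 'a" where
  "line p q t = (\<lambda>l j. p l j + t * (q l j - p l j))"

definition poly_on_lines :: "(('l \<Rightarrow> 'j \<Rightarrow> 'a::field) \<Rightarrow> 'a) \<Rightarrow> bool" where
  "poly_on_lines F \<longleftrightarrow> (\<forall>p q. \<exists>r. \<forall>t. F (line p q t) = poly r t)"

text \<open>Our substitute for Zariski-open sets of parameters.\<close>

definition open_on_lines :: "(('l \<Rightarrow> 'j \<Rightarrow> 'a::field) \<Rightarrow> bool) \<Rightarrow> bool" where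
  "open_on_lines Q \<longleftrightarrow> (\<forall>p q. Q p \<longrightarrow> finite {t. \<not> Q (line p q t)})"

lemma line_0 [simp]: "line p q 0 = p"
  by (simp add: line_def)

lemma line_1 [simp]: "line p q 1 = q"
  by (simp add: line_def)

lemma line_swap: "line q p (1 - t) = line p q t"
  by (simp add: line_def algebra_simps)

lemma poly_on_lines_const [simp, intro]: "poly_on_lines (\<lambda>p. c)"
  unfolding poly_on_lines_def by (intro allI exI[of _ "[:c:]"]) simp

lemma poly_on_lines_coord [simp, intro]: "poly_on_lines (\<lambda>p. p l j)"
  unfolding poly_on_lines_def
  apply (intro allI)
  subgoal for p q
    by (intro exI[of _ "[:p l j, q l j - p l j:]"]) (simp add: line_def algebra_simps)
  done

lemma poly_on_lines_add [intro]:
  "poly_on_lines F \<Longrightarrow> poly_on_lines G \<Longrightarrow> poly_on_lines (\<lambda>p. F p + G p)"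
  unfolding poly_on_lines_def by (metis poly_add)

lemma poly_on_lines_diff:
  "poly_on_lines F \<Longrightarrow> poly_on_lines G \<Longrightarrow> poly_on_lines (\<lambda>p. F p - G p)"
  unfolding poly_on_lines_def by (metis poly_diff)

lemma poly_on_lines_mult [intro]:
  "poly_on_lines F \<Longrightarrow> poly_on_lines G \<Longrightarrow> poly_on_lines (\<lambda>p. F p * G p)"
  unfolding poly_on_lines_def by (metis poly_mult)

lemma poly_on_lines_sum:
  "(\<And>x. x \<in> X \<Longrightarrow> poly_on_lines (F x)) \<Longrightarrow> poly_on_lines (\<lambda>p. \<Sum>x\<in>X. F x p)"
  by (induction X rule: infinite_finite_induct) auto

lemma poly_on_lines_dot:
  "(\<And>j. poly_on_lines (\<lambda>p. h p j)) \<Longrightarrow> (\<And>j. poly_on_lines (\<lambda>p. v p j)) \<Longrightarrow>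
    poly_on_lines (\<lambda>p. dot n (h p) (v p))"
  unfolding dot_def by (intro poly_on_lines_sum poly_on_lines_mult)

lemma poly_on_lines_finite_zeros:
  assumes "poly_on_lines F" "F (line p q t0) \<noteq> 0"
  shows "finite {t. F (line p q t) = 0}"
proof -
  obtain r where r: "\<And>t. F (line p q t) = poly r t" using assms(1) unfolding poly_on_lines_def by blast
  then have "r \<noteq> 0" using assms(2) by auto
  then show ?thesis unfolding r by (rule poly_roots_finite)
qed

lemma poly_funs_poly_on_lines:
  assumes "f \<in> poly_funs I" "\<And>k. k \<in> I \<Longrightarrow> poly_on_lines (\<lambda>p. \<Phi> p k)"
  shows "poly_on_lines (\<lambda>p. f (\<Phi> p))"
  using assms by (induction rule: poly_funs.induct) auto

lemma open_on_lines_nonzero: "poly_on_lines F \<Longrightarrow> open_on_lines (\<lambda>p. F p \<noteq> 0)"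
  unfolding open_on_lines_def using poly_on_lines_finite_zeros[of F _ _ 0] by simp

lemma open_on_lines_at_end:
  assumes "open_on_lines Q" "Q q"
  shows "finite {t. \<not> Q (line p q t)}"
proof -
  have "finite {s. \<not> Q (line q p s)}"
    using assms unfolding open_on_lines_def by blast
  then have "finite ((\<lambda>s. 1 - s) ` {s. \<not> Q (line q p s)})" by (rule finite_imageI)
  moreover have "{t. \<not> Q (line p q t)} \<subseteq> (\<lambda>s. 1 - s) ` {s. \<not> Q (line q p s)}"
  proof
    fix t assume "t \<in> {t. \<not> Q (line p q t)}"
    then show "t \<in> (\<lambda>s. 1 - s) ` {s. \<not> Q (line q p s)}"
      by (intro image_eqI[of _ _ "1 - t"]) (simp_all add: line_swap)
  qed
  ultimately show ?thesis by (rule finite_subset[rotated])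
qed

lemma open_on_lines_Ball:
  assumes "finite X" "\<And>x. x \<in> X \<Longrightarrow> open_on_lines (Q x)"
  shows "open_on_lines (\<lambda>p. \<forall>x\<in>X. Q x p)"
  unfolding open_on_lines_def
proof (intro allI impI)
  fix p q assume "\<forall>x\<in>X. Q x p"
  then have "finite (\<Union>x\<in>X. {t. \<not> Q x (line p q t)})"
    using assms unfolding open_on_lines_def by blast
  moreover have "{t. \<not> (\<forall>x\<in>X. Q x (line p q t))} = (\<Union>x\<in>X. {t. \<not> Q x (line p q t)})" by blast
  ultimately show "finite {t. \<not> (\<forall>x\<in>X. Q x (line p q t))}" by (simp only:)
qed

lemma open_on_lines_Bex:
  assumes "\<And>x. x \<in> X \<Longrightarrow> open_on_lines (Q x)"
  shows "open_on_lines (\<lambda>p. \<exists>x\<in>X. Q x p)"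
  unfolding open_on_lines_def
proof (intro allI impI)
  fix p q assume "\<exists>x\<in>X. Q x p"
  then obtain x where x: "x \<in> X" "Q x p" by blast
  then have "finite {t. \<not> Q x (line p q t)}" using assms unfolding open_on_lines_def by blast
  then show "finite {t. \<not> (\<exists>x\<in>X. Q x (line p q t))}" by (rule finite_subset[rotated]) (use x in blast)
qed

lemma open_on_lines_nonzero_vec:
  "(\<And>j. poly_on_lines (\<lambda>p. h p j)) \<Longrightarrow> open_on_lines (\<lambda>p. nonzero_vec n (h p))"
  unfolding nonzero_vec_def Bex_def[of "{..<n}", simplified, symmetric]
  by (intro open_on_lines_Bex open_on_lines_nonzero) auto

lemma open_on_lines_indep_pair:
  assumes "\<And>j. poly_on_lines (\<lambda>p. h p j)" "\<And>j. poly_on_lines (\<lambda>p. g p j)"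
  shows "open_on_lines (\<lambda>p. indep_pair n (h p) (g p))"
proof -
  have "(\<lambda>p. indep_pair n (h p) (g p)) =
      (\<lambda>p. \<exists>k\<in>{..<n}. \<exists>l\<in>{..<n}. h p k * g p l - h p l * g p k \<noteq> 0)"
    unfolding indep_pair_def by blast
  then show ?thesis
    using assms by (simp only:) (intro open_on_lines_Bex open_on_lines_nonzero poly_on_lines_diff
        poly_on_lines_mult)
qed

lemma open_on_lines_independent:
  assumes "finite S" "\<And>i j. i \<in> S \<Longrightarrow> j \<in> J \<Longrightarrow> poly_on_lines (\<lambda>p. F p i j)"
  shows "open_on_lines (\<lambda>p. \<not> lin_dependent J (F p) S)"
  using assms
proof (induction S arbitrary: F rule: finite_induct)
  case empty
  then show ?case by (simp add: open_on_lines_def lin_dependent_def)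
next
  case (insert i0 S)
  show ?case
    unfolding open_on_lines_def
  proof (intro allI impI)
    fix p q assume indep: "\<not> lin_dependent J (F p) (insert i0 S)"
    then obtain j0 where j0: "j0 \<in> J" "F p i0 j0 \<noteq> 0"
      using lin_dependent_zero_vector[of i0 "insert i0 S" J "F p"] insert.hyps(1) by blast
    let ?G = "\<lambda>p. eliminate (F p) i0 j0"
    have "open_on_lines (\<lambda>p. \<not> lin_dependent J (?G p) S)"
      using insert.prems j0(1) unfolding eliminate_def
      by (intro insert.IH poly_on_lines_diff poly_on_lines_mult) auto
    moreover have "\<not> lin_dependent J (?G p) S"
      using indep lin_dependent_insert_eliminate[of S i0 j0 J "F p"] insert.hyps j0 by blast
    ultimately have "finite {t. lin_dependent J (?G (line p q t)) S}"
      unfolding open_on_lines_def by auto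
    moreover have "finite {t. F (line p q t) i0 j0 = 0}"
      using j0 insert.prems by (intro poly_on_lines_finite_zeros[of _ _ _ 0]) auto
    ultimately have "finite ({t. lin_dependent J (?G (line p q t)) S} \<union> {t. F (line p q t) i0 j0 = 0})"
      by blast
    moreover have "{t. \<not> \<not> lin_dependent J (F (line p q t)) (insert i0 S)} \<subseteq>
        {t. lin_dependent J (?G (line p q t)) S} \<union> {t. F (line p q t) i0 j0 = 0}"
    proof
      fix t assume "t \<in> {t. \<not> \<not> lin_dependent J (F (line p q t)) (insert i0 S)}"
      then show "t \<in> {t. lin_dependent J (?G (line p q t)) S} \<union> {t. F (line p q t) i0 j0 = 0}"
        using lin_dependent_insert_eliminate[of S i0 j0 J "F (line p q t)"] insert.hyps j0(1)
        by blast
    qed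
    ultimately show "finite {t. \<not> \<not> lin_dependent J (F (line p q t)) (insert i0 S)}"
      by (rule finite_subset[rotated])
  qed
qed

lemma exists_common_point:
  fixes L :: "('l \<Rightarrow> 'j \<Rightarrow> 'a::field_char_0) set"
  assumes "finite Qs" "\<And>Q. Q \<in> Qs \<Longrightarrow> open_on_lines Q" "\<And>Q. Q \<in> Qs \<Longrightarrow> \<exists>p\<in>L. Q p"
    "p0 \<in> L" "\<And>p q t. p \<in> L \<Longrightarrow> q \<in> L \<Longrightarrow> line p q t \<in> L"
  shows "\<exists>p\<in>L. \<forall>Q\<in>Qs. Q p"
  using assms(1-3)
proof (induction Qs rule: finite_induct)
  case empty
  then show ?case using assms(4) by blast
next
  case (insert Q0 Qs)
  obtain p where p: "p \<in> L" "\<forall>Q\<in>Qs. Q p" using insert by blast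
  obtain q where q: "q \<in> L" "Q0 q" using insert.prems by blast
  have "open_on_lines (\<lambda>p. \<forall>Q\<in>Qs. Q p)" using insert by (intro open_on_lines_Ball) auto
  then have "finite {t. \<not> (\<forall>Q\<in>Qs. Q (line p q t))}"
    using p(2) unfolding open_on_lines_def by blast
  moreover have "finite {t. \<not> Q0 (line p q t)}"
    using insert.prems q(2) by (intro open_on_lines_at_end) auto
  ultimately have "finite ({t. \<not> (\<forall>Q\<in>Qs. Q (line p q t))} \<union> {t. \<not> Q0 (line p q t)})"
    by (rule finite_UnI)
  then obtain t where "t \<notin> {t. \<not> (\<forall>Q\<in>Qs. Q (line p q t))} \<union> {t. \<not> Q0 (line p q t)}"
    using ex_new_if_finite[OF infinite_UNIV_char_0] by blast
  then have "\<forall>Q\<in>insert Q0 Qs. Q (line p q t)" by blast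
  then show ?case using assms(5)[OF p(1) q(1)] by blast
qed

lemma zariski_closure_not_subset:
  assumes "zariski_closed I A" "\<not> zariski_closure I S \<subseteq> A"
  obtains f where "f \<in> poly_funs I" "\<forall>x\<in>A. f x = 0" "\<exists>y\<in>S. f y \<noteq> 0"
proof -
  obtain P where P: "P \<subseteq> poly_funs I" "A = {x \<in> cspace I. \<forall>f\<in>P. f x = 0}"
    using assms(1) unfolding zariski_closed_def by blast
  obtain v where v: "v \<in> zariski_closure I S" "v \<notin> A" using assms(2) by blast
  then obtain f where "f \<in> P" "f v \<noteq> 0" using P(2) unfolding zariski_closure_def by blast
  then show ?thesis using that[of f] v(1) P unfolding zariski_closure_def by blast
qed

lemma zariski_irreducible_closure_image:
  fixes \<Phi> :: "('l \<Rightarrow> 'j \<Rightarrow> complex) \<Rightarrow> nat \<times> nat \<Rightarrow> complex"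
  assumes G: "open_on_lines G" "G p0"
    and \<Phi>: "\<And>k. k \<in> I \<Longrightarrow> poly_on_lines (\<lambda>p. \<Phi> p k)" "\<And>p. G p \<Longrightarrow> \<Phi> p \<in> cspace I"
  shows "zariski_irreducible I (zariski_closure I (\<Phi> ` Collect G))"
  unfolding zariski_irreducible_def
proof (intro conjI allI impI)
  let ?V = "zariski_closure I (\<Phi> ` Collect G)"
  have image_in_closure: "\<Phi> ` Collect G \<subseteq> ?V"
    using \<Phi>(2) unfolding zariski_closure_def by auto
  then show "?V \<noteq> {}" using G(2) by blast
  fix A B assume AB: "zariski_closed I A \<and> zariski_closed I B \<and> ?V \<subseteq> A \<union> B"
  show "?V \<subseteq> A \<or> ?V \<subseteq> B"
  proof (rule ccontr)
    assume "\<not> (?V \<subseteq> A \<or> ?V \<subseteq> B)"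
    then have "\<not> ?V \<subseteq> A" "\<not> ?V \<subseteq> B" by auto
    have closed: "zariski_closed I A" "zariski_closed I B" using AB by auto
    obtain fa where fa: "fa \<in> poly_funs I" "\<forall>x\<in>A. fa x = 0" "\<exists>y\<in>\<Phi> ` Collect G. fa y \<noteq> 0"
      by (rule zariski_closure_not_subset[OF closed(1) \<open>\<not> ?V \<subseteq> A\<close>])
    obtain fb where fb: "fb \<in> poly_funs I" "\<forall>x\<in>B. fb x = 0" "\<exists>y\<in>\<Phi> ` Collect G. fb y \<noteq> 0"
      by (rule zariski_closure_not_subset[OF closed(2) \<open>\<not> ?V \<subseteq> B\<close>])
    obtain p q where pq: "G p" "fa (\<Phi> p) \<noteq> 0" "G q" "fb (\<Phi> q) \<noteq> 0"
      using fa(3) fb(3) by blast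
    have "finite {t. \<not> G (line p q t)}"
      using G(1) pq(1) unfolding open_on_lines_def by blast
    moreover have "finite {t. fa (\<Phi> (line p q t)) = 0}"
      using poly_funs_poly_on_lines[OF fa(1) \<Phi>(1)] pq(2)
      by (intro poly_on_lines_finite_zeros[of _ p q 0]) simp_all
    moreover have "finite {t. fb (\<Phi> (line p q t)) = 0}"
      using poly_funs_poly_on_lines[OF fb(1) \<Phi>(1)] pq(4)
      by (intro poly_on_lines_finite_zeros[of _ p q 1]) simp_all
    ultimately have bad: "finite ({t. \<not> G (line p q t)} \<union> {t. fa (\<Phi> (line p q t)) = 0}
        \<union> {t. fb (\<Phi> (line p q t)) = 0})" by (simp only: finite_Un)
    obtain t where "t \<notin> {t. \<not> G (line p q t)} \<union> {t. fa (\<Phi> (line p q t)) = 0}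
        \<union> {t. fb (\<Phi> (line p q t)) = 0}"
      using ex_new_if_finite[OF infinite_UNIV_char_0 bad] by blast
    then have t: "G (line p q t)" "fa (\<Phi> (line p q t)) \<noteq> 0" "fb (\<Phi> (line p q t)) \<noteq> 0"
      by simp_all
    then have "\<Phi> (line p q t) \<in> ?V" using image_in_closure by blast
    then have "\<Phi> (line p q t) \<in> A \<union> B" using AB by blast
    then show False using t fa(2) fb(2) by blast
  qed
qed

section \<open>Quasi-paving matroids\<close>

lemma qp_rep_three_blocks:
  assumes "qp_rep d H" "A \<in> H" "B \<in> H" "C \<in> H" "A \<noteq> B" "e \<in> A" "e \<in> B" "e \<in> C"
  shows "C = A \<or> C = B"
  using assms unfolding qp_rep_def by blast

lemma qp_dependent_mono: "qp_dependent n d H S \<Longrightarrow> S \<subseteq> T \<Longrightarrow> qp_dependent n d H T"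
  unfolding qp_dependent_def by blast

lemma qp_dependent_in_two_blocks:
  assumes "A \<in> H" "B \<in> H" "A \<noteq> B" "T \<subseteq> A \<inter> B" "finite T" "card T = n - 1"
  shows "qp_dependent n d H T"
  using assms unfolding qp_dependent_def qp_circuit_def qp_type1_def by blast

lemma qp_dependent_in_block:
  assumes "A \<in> H" "T \<subseteq> A" "finite T" "card T = n"
  shows "qp_dependent n d H T"
  using assms unfolding qp_dependent_def qp_circuit_def qp_type2_def by blast

lemma qp_dependent_card:
  assumes "T \<subseteq> {1..d}" "card T = n + 1"
  shows "qp_dependent n d H T"
  using assms unfolding qp_dependent_def qp_circuit_def qp_type3_def by blast

lemma qp_independent_card:
  assumes "S \<subseteq> {1..d}" "\<not> qp_dependent n d H S"
  shows "card S \<le> n"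
proof (rule ccontr)
  assume "\<not> card S \<le> n"
  then obtain T where "T \<subseteq> S" "card T = n + 1"
    by (metis Suc_eq_plus1 not_less_eq_eq obtain_subset_with_card_n)
  then show False using assms qp_dependent_card[of T d n H] qp_dependent_mono by blast
qed

lemma qp_independent_block_card:
  assumes "S \<subseteq> {1..d}" "\<not> qp_dependent n d H S" "A \<in> H"
  shows "card (S \<inter> A) < n"
proof (rule ccontr)
  assume "\<not> card (S \<inter> A) < n"
  then obtain T where T: "T \<subseteq> S \<inter> A" "card T = n"
    by (meson not_less obtain_subset_with_card_n)
  moreover have "finite T" using T(1) assms(1) by (meson finite_atLeastAtMost finite_subset le_infE)
  ultimately show False
    using assms qp_dependent_in_block[of A H T n d] qp_dependent_mono by blast
qed

lemma qp_independent_two_blocks_card: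
  assumes "S \<subseteq> {1..d}" "\<not> qp_dependent n d H S" "A \<in> H" "B \<in> H" "A \<noteq> B"
  shows "card (S \<inter> A \<inter> B) + 1 < n"
proof (rule ccontr)
  assume "\<not> card (S \<inter> A \<inter> B) + 1 < n"
  then have "n - 1 \<le> card (S \<inter> A \<inter> B)" by simp
  then obtain T where T: "T \<subseteq> S \<inter> A \<inter> B" "card T = n - 1"
    by (meson obtain_subset_with_card_n)
  moreover have "finite T" using T(1) assms(1) by (meson finite_atLeastAtMost finite_subset le_infE)
  ultimately show False
    using assms qp_dependent_in_two_blocks[of A H B T n d] qp_dependent_mono by blast
qed

lemma qp_independent_insert_outside_block:
  assumes rep: "qp_rep d H" and A: "A \<in> H" and "1 \<le> n"
    and I: "I \<subseteq> A" "finite I" "\<not> qp_dependent n d H I" "card I = n - 1"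
    and e: "e \<notin> A" "\<not> qp_dependent n d H {e}"
  shows "\<not> qp_dependent n d H (insert e I)"
proof
  assume "qp_dependent n d H (insert e I)"
  then obtain C where C: "C \<subseteq> insert e I" "qp_circuit n d H C" unfolding qp_dependent_def by blast
  have "e \<in> C" using C I(3) unfolding qp_dependent_def by blast
  have "e \<notin> I" using e(1) I(1) by blast
  then have card_insert: "card (insert e I) = n" using I(2,4) \<open>1 \<le> n\<close> by simp
  consider "qp_type1 n H C" | "qp_type2 n H C" | "qp_type3 n d H C"
    using C(2) unfolding qp_circuit_def by blast
  then show False
  proof cases
    case 1
    then obtain K L where KL: "K \<in> H" "L \<in> H" "K \<noteq> L" "C \<subseteq> K \<inter> L"
      unfolding qp_type1_def by blast
    show False
    proof (cases "C = {e}")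
      case True
      then show False using C(2) e(2) unfolding qp_dependent_def by blast
    next
      case False
      then obtain f where "f \<in> C" "f \<noteq> e" using \<open>e \<in> C\<close> by blast
      then have "f \<in> A" "f \<in> K" "f \<in> L" using C(1) I(1) KL(4) by blast+
      moreover have "A \<noteq> K" "A \<noteq> L" using KL(4) \<open>e \<in> C\<close> e(1) by blast+
      ultimately show False using qp_rep_three_blocks[OF rep KL(1,2) A KL(3)] by blast
    qed
  next
    case 2
    then obtain K where K: "K \<in> H" "C \<subseteq> K" "card C = n" unfolding qp_type2_def by blast
    have "C = insert e I"
      using C(1) K(3) card_insert I(2) by (intro card_subset_eq) auto
    then have "I \<subseteq> A \<inter> K" "A \<noteq> K" using I(1) K(2) e(1) by blast+
    then show False using A K(1) I qp_dependent_in_two_blocks[of A H K I n d] by blast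
  next
    case 3
    then have "card C = n + 1" unfolding qp_type3_def by blast
    moreover have "card C \<le> card (insert e I)" using C(1) I(2) by (intro card_mono) auto
    ultimately show False using card_insert by simp
  qed
qed

lemma qp_independent_insert_from_other_block:
  assumes rep: "qp_rep d H" and AB: "A \<in> H" "B \<in> H" "A \<noteq> B" and "1 \<le> n"
    and IA: "IA \<subseteq> A" "\<not> qp_dependent n d H IA" "card IA = n - 1"
    and IB: "IB \<subseteq> B" "\<not> qp_dependent n d H IB" "card IB = n - 1"
  obtains e where "e \<in> IB" "e \<notin> A" "\<not> qp_dependent n d H (insert e IA)"
proof -
  have "finite A" "finite B" using rep AB unfolding qp_rep_def by (meson finite_atLeastAtMost finite_subset)+
  then have fin: "finite IA" "finite IB" using IA(1) IB(1) finite_subset by blast+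
  have "\<not> IB \<subseteq> A"
    using AB IB fin qp_dependent_in_two_blocks[of A H B IB n d] by blast
  then obtain e where e: "e \<in> IB" "e \<notin> A" by blast
  moreover have "\<not> qp_dependent n d H {e}" using e(1) IB(2) qp_dependent_mono by blast
  ultimately show ?thesis
    using qp_independent_insert_outside_block[OF rep AB(1) \<open>1 \<le> n\<close> IA(1) fin(1) IA(2,3)] that by blast
qed

section \<open>A polynomial parametrization\<close>

datatype label = Normal "nat set" | Anchor "nat set" | Point nat | Elem_anchor nat

text \<open>The projection of z along a into the hyperplane orthogonal to h, multiplied by the
  pairing of h and a so that it is polynomial in all three vectors.\<close>

definition hyperplane_proj :: "nat \<Rightarrow> (nat \<Rightarrow> 'a::field) \<Rightarrow> (nat \<Rightarrow> 'a) \<Rightarrow> (nat \<Rightarrow> 'a) \<Rightarrow> nat \<Rightarrow> 'a" where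
  "hyperplane_proj n h a z = (\<lambda>j. dot n h a * z j - dot n h z * a j)"

lemma dot_hyperplane_proj: "dot n h (hyperplane_proj n h a z) = 0"
  unfolding hyperplane_proj_def dot_diff_scale by (simp add: mult.commute)

lemma dot_hyperplane_proj_other:
  "dot n g a = 0 \<Longrightarrow> dot n g z = 0 \<Longrightarrow> dot n g (hyperplane_proj n h a z) = 0"
  unfolding hyperplane_proj_def dot_diff_scale by simp

lemma hyperplane_proj_id: "dot n h a = 1 \<Longrightarrow> dot n h z = 0 \<Longrightarrow> hyperplane_proj n h a z = z"
  unfolding hyperplane_proj_def by simp

lemma poly_on_lines_hyperplane_proj:
  assumes "\<And>j. poly_on_lines (\<lambda>p. h p j)" "\<And>j. poly_on_lines (\<lambda>p. a p j)" "\<And>j. poly_on_lines (\<lambda>p. z p j)"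
  shows "poly_on_lines (\<lambda>p. hyperplane_proj n (h p) (a p) (z p) j)"
  unfolding hyperplane_proj_def using assms by (intro poly_on_lines_diff poly_on_lines_mult poly_on_lines_dot)

definition block_proj :: "nat \<Rightarrow> (label \<Rightarrow> nat \<Rightarrow> 'a::field) \<Rightarrow> nat set \<Rightarrow> (nat \<Rightarrow> 'a) \<Rightarrow> nat \<Rightarrow> 'a" where
  "block_proj n p A = hyperplane_proj n (p (Normal A)) (p (Anchor A))"

definition first_block :: "nat set set \<Rightarrow> nat \<Rightarrow> nat set" where
  "first_block H e = (SOME A. A \<in> H \<and> e \<in> A)"

definition second_block :: "nat set set \<Rightarrow> nat \<Rightarrow> nat set" where
  "second_block H e = (SOME B. B \<in> H \<and> e \<in> B \<and> B \<noteq> first_block H e)"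

lemma first_block_mem: "\<exists>A\<in>H. e \<in> A \<Longrightarrow> first_block H e \<in> H \<and> e \<in> first_block H e"
  unfolding first_block_def by (rule someI_ex) blast

lemma second_block_mem:
  "\<exists>B\<in>H. e \<in> B \<and> B \<noteq> first_block H e \<Longrightarrow>
    second_block H e \<in> H \<and> e \<in> second_block H e \<and> second_block H e \<noteq> first_block H e"
  unfolding second_block_def by (rule someI_ex) blast

text \<open>The projection into the hyperplane of the second block is taken along the element's own
  anchor, itself first projected into the hyperplane of the first block; so the result lies in
  both hyperplanes.\<close>

definition gamma :: "nat \<Rightarrow> nat set set \<Rightarrow> (label \<Rightarrow> nat \<Rightarrow> 'a::field) \<Rightarrow> nat \<Rightarrow> nat \<Rightarrow> 'a" where
  "gamma n H p e =
    (if \<not> (\<exists>A\<in>H. e \<in> A) then p (Point e)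
     else if \<not> (\<exists>B\<in>H. e \<in> B \<and> B \<noteq> first_block H e)
       then block_proj n p (first_block H e) (p (Point e))
     else hyperplane_proj n (p (Normal (second_block H e)))
       (block_proj n p (first_block H e) (p (Elem_anchor e)))
       (block_proj n p (first_block H e) (p (Point e))))"

lemma gamma_no_block: "\<not> (\<exists>A\<in>H. e \<in> A) \<Longrightarrow> gamma n H p e = p (Point e)"
  unfolding gamma_def by simp

lemma gamma_one_block:
  "\<exists>A\<in>H. e \<in> A \<Longrightarrow> \<not> (\<exists>B\<in>H. e \<in> B \<and> B \<noteq> first_block H e) \<Longrightarrow>
    gamma n H p e = block_proj n p (first_block H e) (p (Point e))"
  unfolding gamma_def by simp

lemma gamma_two_blocks:
  "\<exists>B\<in>H. e \<in> B \<and> B \<noteq> first_block H e \<Longrightarrow>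
    gamma n H p e = hyperplane_proj n (p (Normal (second_block H e)))
      (block_proj n p (first_block H e) (p (Elem_anchor e))) (block_proj n p (first_block H e) (p (Point e)))"
  unfolding gamma_def by auto

lemma dot_gamma_block:
  assumes "qp_rep d H" "A \<in> H" "e \<in> A"
  shows "dot n (p (Normal A)) (gamma n H p e) = 0"
proof -
  have in_block: "\<exists>A\<in>H. e \<in> A" using assms(2,3) by blast
  have first: "first_block H e \<in> H" "e \<in> first_block H e" using first_block_mem[OF in_block] by simp_all
  show ?thesis
  proof (cases "\<exists>B\<in>H. e \<in> B \<and> B \<noteq> first_block H e")
    case False
    then have "A = first_block H e" using assms(2,3) by blast
    then show ?thesis
      unfolding gamma_one_block[OF in_block False] block_proj_def by (simp add: dot_hyperplane_proj)
  next
    case True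
    have second: "second_block H e \<in> H" "e \<in> second_block H e" "second_block H e \<noteq> first_block H e"
      using second_block_mem[OF True] by simp_all
    have "A = first_block H e \<or> A = second_block H e"
      using qp_rep_three_blocks[OF assms(1) first(1) second(1) assms(2) second(3)[symmetric] first(2)
          second(2) assms(3)] .
    then show ?thesis
      unfolding gamma_two_blocks[OF True] block_proj_def
      by (auto simp: dot_hyperplane_proj dot_hyperplane_proj_other)
  qed
qed

lemma gamma_eq_point:
  assumes "\<forall>A\<in>H. e \<in> A \<longrightarrow> dot n (p (Normal A)) (p (Point e)) = 0 \<and> dot n (p (Normal A)) (p (Anchor A)) = 1"
    and "\<exists>B\<in>H. e \<in> B \<and> B \<noteq> first_block H e \<Longrightarrow>
      dot n (p (Normal (first_block H e))) (p (Elem_anchor e)) = 0 \<and>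
      dot n (p (Normal (second_block H e))) (p (Elem_anchor e)) = 1"
  shows "gamma n H p e = p (Point e)"
proof (cases "\<exists>A\<in>H. e \<in> A")
  case in_block: True
  note first = first_block_mem[OF in_block]
  have point: "block_proj n p (first_block H e) (p (Point e)) = p (Point e)"
    using assms(1) first unfolding block_proj_def by (intro hyperplane_proj_id) auto
  show ?thesis
  proof (cases "\<exists>B\<in>H. e \<in> B \<and> B \<noteq> first_block H e")
    case True
    note second = second_block_mem[OF True]
    have "block_proj n p (first_block H e) (p (Elem_anchor e)) = p (Elem_anchor e)"
      using assms first True unfolding block_proj_def by (intro hyperplane_proj_id) auto
    moreover have "hyperplane_proj n (p (Normal (second_block H e))) (p (Elem_anchor e)) (p (Point e)) = p (Point e)"
      using assms second True by (intro hyperplane_proj_id) auto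
    ultimately show ?thesis unfolding gamma_two_blocks[OF True] point by simp
  qed (simp add: gamma_one_block[OF in_block] point)
qed (simp add: gamma_no_block)

lemma poly_on_lines_gamma: "poly_on_lines (\<lambda>p. gamma n H p e j)"
  by (cases "\<exists>A\<in>H. e \<in> A"; cases "\<exists>B\<in>H. e \<in> B \<and> B \<noteq> first_block H e")
    (simp_all add: gamma_no_block gamma_one_block gamma_two_blocks block_proj_def
      poly_on_lines_hyperplane_proj)

definition generic_normals :: "nat \<Rightarrow> nat set set \<Rightarrow> (label \<Rightarrow> nat \<Rightarrow> 'a::field) \<Rightarrow> bool" where
  "generic_normals n H p \<longleftrightarrow> (\<forall>A\<in>H. nonzero_vec n (p (Normal A))) \<and>
     (\<forall>A\<in>H. \<forall>B\<in>H. A \<noteq> B \<longrightarrow> indep_pair n (p (Normal A)) (p (Normal B)))"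

definition generic_normals_conditions :: "nat \<Rightarrow> nat set set \<Rightarrow> ((label \<Rightarrow> nat \<Rightarrow> 'a::field) \<Rightarrow> bool) set" where
  "generic_normals_conditions n H =
     (\<lambda>A p. nonzero_vec n (p (Normal A))) ` H \<union>
     (\<lambda>(A, B) p. indep_pair n (p (Normal A)) (p (Normal B))) ` {(A, B). A \<in> H \<and> B \<in> H \<and> A \<noteq> B}"

lemma generic_normals_iff_conditions:
  "generic_normals n H p \<longleftrightarrow> (\<forall>Q\<in>generic_normals_conditions n H. Q p)"
  unfolding generic_normals_def generic_normals_conditions_def by auto

lemma finite_generic_normals_conditions:
  assumes "finite H"
  shows "finite (generic_normals_conditions n H)"
proof -
  have "{(A, B). A \<in> H \<and> B \<in> H \<and> A \<noteq> B} \<subseteq> H \<times> H" by auto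
  then have "finite {(A, B). A \<in> H \<and> B \<in> H \<and> A \<noteq> B}"
    by (rule finite_subset) (simp add: assms)
  then show ?thesis unfolding generic_normals_conditions_def using assms by simp
qed

lemma open_on_lines_generic_normals_conditions:
  "Q \<in> generic_normals_conditions n H \<Longrightarrow> open_on_lines Q"
  unfolding generic_normals_conditions_def
  by (auto intro!: open_on_lines_nonzero_vec open_on_lines_indep_pair)

lemma open_on_lines_generic_normals: "finite H \<Longrightarrow> open_on_lines (generic_normals n H)"
  unfolding generic_normals_iff_conditions
  by (intro open_on_lines_Ball finite_generic_normals_conditions open_on_lines_generic_normals_conditions)

lemma exists_generic_normals:
  fixes L :: "(label \<Rightarrow> nat \<Rightarrow> 'a::field_char_0) set"
  assumes "finite H" "p0 \<in> L" "\<And>p q t. p \<in> L \<Longrightarrow> q \<in> L \<Longrightarrow> line p q t \<in> L"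
    and "\<And>A. A \<in> H \<Longrightarrow> \<exists>p\<in>L. nonzero_vec n (p (Normal A))"
    and "\<And>A B. A \<in> H \<Longrightarrow> B \<in> H \<Longrightarrow> A \<noteq> B \<Longrightarrow> \<exists>p\<in>L. indep_pair n (p (Normal A)) (p (Normal B))"
  shows "\<exists>p\<in>L. generic_normals n H p"
proof -
  have "\<exists>p\<in>L. Q p" if "Q \<in> generic_normals_conditions n H" for Q
    using that assms(4,5) unfolding generic_normals_conditions_def by auto
  then show ?thesis
    unfolding generic_normals_iff_conditions
    using assms(1-3) by (intro exists_common_point finite_generic_normals_conditions
        open_on_lines_generic_normals_conditions)
qed

lemma exists_param_with_points:
  assumes gen: "generic_normals n H p"
    and z: "\<And>A e. A \<in> H \<Longrightarrow> e \<in> A \<Longrightarrow> e \<in> S \<Longrightarrow> dot n (p (Normal A)) (z e) = 0"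
  shows "\<exists>q. generic_normals n H q \<and> (\<forall>e\<in>S. gamma n H q e = z e)"
proof -
  define anchor where "anchor A = (SOME a. dot n (p (Normal A)) a = 1)" for A
  define elem_anchor where "elem_anchor e = (SOME c. dot n (p (Normal (first_block H e))) c = 0 \<and>
    dot n (p (Normal (second_block H e))) c = 1)" for e
  define q where "q l = (case l of Normal A \<Rightarrow> p (Normal A) | Anchor A \<Rightarrow> anchor A
    | Point e \<Rightarrow> z e | Elem_anchor e \<Rightarrow> elem_anchor e)" for l
  have "generic_normals n H q" using gen by (simp add: generic_normals_def q_def)
  moreover have "gamma n H q e = z e" if "e \<in> S" for e
  proof -
    have "dot n (p (Normal A)) (anchor A) = 1" if "A \<in> H" for A
    proof -
      have "nonzero_vec n (p (Normal A))" using gen that unfolding generic_normals_def by blast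
      then have "\<exists>a. dot n (p (Normal A)) a = 1" by (meson exists_unit_dot)
      then show ?thesis unfolding anchor_def by (rule someI_ex)
    qed
    moreover have "dot n (p (Normal (first_block H e))) (elem_anchor e) = 0 \<and>
        dot n (p (Normal (second_block H e))) (elem_anchor e) = 1"
      if "\<exists>B\<in>H. e \<in> B \<and> B \<noteq> first_block H e"
    proof -
      have "first_block H e \<in> H" using first_block_mem that by blast
      moreover note second_block_mem[OF that]
      ultimately have "indep_pair n (p (Normal (first_block H e))) (p (Normal (second_block H e)))"
        using gen unfolding generic_normals_def by metis
      then have "\<exists>c. dot n (p (Normal (first_block H e))) c = 0 \<and>
          dot n (p (Normal (second_block H e))) c = 1" by (meson exists_dual_vector)
      then show ?thesis unfolding elem_anchor_def by (rule someI_ex)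
    qed
    ultimately have "gamma n H q e = q (Point e)"
      using z \<open>e \<in> S\<close> by (intro gamma_eq_point) (simp_all add: q_def)
    then show ?thesis by (simp add: q_def)
  qed
  ultimately show ?thesis by blast
qed

lemma lin_dependent_gamma_circuit:
  assumes rep: "qp_rep d H" and "\<not> qp_dependent n d H {}" and gen: "generic_normals n H p"
    and C: "qp_circuit n d H C"
  shows "lin_dependent {..<n} (gamma n H p) C"
proof -
  have "C \<noteq> {}" using C assms(2) unfolding qp_dependent_def by blast
  consider "qp_type1 n H C" | "qp_type2 n H C" | "qp_type3 n d H C"
    using C unfolding qp_circuit_def by blast
  then show ?thesis
  proof cases
    case 1
    then obtain A B where AB: "A \<in> H" "B \<in> H" "A \<noteq> B" "C \<subseteq> A \<inter> B" "finite C" "card C = n - 1"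
      unfolding qp_type1_def by blast
    have "n \<le> card C + 1" using AB(5,6) \<open>C \<noteq> {}\<close> by (simp add: card_gt_0_iff)
    moreover have "indep_pair n (p (Normal A)) (p (Normal B))" using gen AB unfolding generic_normals_def by blast
    ultimately show ?thesis
      using AB dot_gamma_block[OF rep] by (intro lin_dependent_in_two_hyperplanes) blast+
  next
    case 2
    then obtain A where A: "A \<in> H" "C \<subseteq> A" "finite C" "card C = n"
      unfolding qp_type2_def by blast
    have "nonzero_vec n (p (Normal A))" using gen A unfolding generic_normals_def by blast
    moreover have "\<forall>i\<in>C. dot n (p (Normal A)) (gamma n H p i) = 0"
      using A(1,2) dot_gamma_block[OF rep] by blast
    ultimately show ?thesis
      using A(3,4) by (intro lin_dependent_in_hyperplane) auto
  next
    case 3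
    then have "C \<subseteq> {1..d}" "card C = n + 1" unfolding qp_type3_def by blast+
    then show ?thesis by (intro lin_dependent_card_gt) (auto intro: finite_subset)
  qed
qed

lemma lin_dependent_gamma:
  assumes rep: "qp_rep d H" and "\<not> qp_dependent n d H {}" and gen: "generic_normals n H p"
    and S: "S \<subseteq> {1..d}" "qp_dependent n d H S"
  shows "lin_dependent {..<n} (gamma n H p) S"
proof -
  obtain C where C: "C \<subseteq> S" "qp_circuit n d H C" using S(2) unfolding qp_dependent_def by blast
  have "lin_dependent {..<n} (gamma n H p) C"
    using lin_dependent_gamma_circuit[OF rep assms(2) gen C(2)] .
  moreover have "finite S" using S(1) by (rule finite_subset) simp
  ultimately show ?thesis by (rule lin_dependent_mono[OF _ C(1)])
qed

definition good_param :: "nat \<Rightarrow> nat \<Rightarrow> nat set set \<Rightarrow> (label \<Rightarrow> nat \<Rightarrow> 'a::field) \<Rightarrow> bool" where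
  "good_param n d H p \<longleftrightarrow> generic_normals n H p \<and>
     (\<forall>S\<subseteq>{1..d}. \<not> qp_dependent n d H S \<longrightarrow> \<not> lin_dependent {..<n} (gamma n H p) S)"

definition realization_of :: "nat \<Rightarrow> nat \<Rightarrow> nat set set \<Rightarrow> (label \<Rightarrow> nat \<Rightarrow> complex) \<Rightarrow> nat \<times> nat \<Rightarrow> complex" where
  "realization_of n d H p = (\<lambda>(i, j). if (i, j) \<in> idx n d then gamma n H p i j else 0)"

lemma realization_of_cspace: "realization_of n d H p \<in> cspace (idx n d)"
  unfolding cspace_def realization_of_def by auto

lemma poly_on_lines_realization_of: "poly_on_lines (\<lambda>p. realization_of n d H p k)"
proof (cases k)
  case (Pair i j)
  then show ?thesis
    unfolding realization_of_def by (cases "(i, j) \<in> idx n d") (simp_all add: poly_on_lines_gamma)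
qed

lemma lin_dep_family_iff_lin_dependent:
  "lin_dep_family n x S \<longleftrightarrow> lin_dependent {..<n} (\<lambda>i j. x (i, j)) S"
  unfolding lin_dep_family_def lin_dependent_def lessThan_iff Ball_def by (rule refl)

lemma lin_dep_family_realization_of:
  assumes "S \<subseteq> {1..d}"
  shows "lin_dep_family n (realization_of n d H p) S \<longleftrightarrow> lin_dependent {..<n} (gamma n H p) S"
  unfolding lin_dep_family_iff_lin_dependent
  using assms by (intro lin_dependent_cong) (auto simp: realization_of_def idx_def)

lemma good_param_realization:
  assumes rep: "qp_rep d H" and "\<not> qp_dependent n d H {}" and good: "good_param n d H p"
  shows "realization_of n d H p \<in> qp_realizations n d H"
proof -
  have gen: "generic_normals n H p"
    and indep: "\<And>S. S \<subseteq> {1..d} \<Longrightarrow> \<not> qp_dependent n d H S \<Longrightarrow> \<not> lin_dependent {..<n} (gamma n H p) S"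
    using good unfolding good_param_def by auto
  have "qp_dependent n d H S \<longleftrightarrow> lin_dep_family n (realization_of n d H p) S" if S: "S \<subseteq> {1..d}" for S
    unfolding lin_dep_family_realization_of[OF S]
    using lin_dependent_gamma[OF rep assms(2) gen S] indep[OF S] by blast
  then show ?thesis unfolding qp_realizations_def using realization_of_cspace by blast
qed

lemma exists_less_notin:
  assumes "X \<subseteq> {..<n}" "card X < n"
  obtains k where "k < n" "k \<notin> X"
proof -
  have "finite X" using assms(1) finite_subset by blast
  then have "\<not> {..<n} \<subseteq> X" using assms(2) card_mono[of X "{..<n}"] by auto
  then show ?thesis using that by blast
qed

lemma exists_distinct_less_notin:
  assumes "X \<subseteq> {..<n}" "Y \<subseteq> {..<n}" "card X < n" "card Y < n" "card (X \<inter> Y) + 1 < n"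
  obtains k l where "k < n" "l < n" "k \<notin> X" "l \<notin> Y" "k \<noteq> l"
proof -
  obtain l where l: "l < n" "l \<notin> Y" using exists_less_notin[OF assms(2,4)] .
  have "finite (X \<inter> Y)" using assms(1) finite_subset by blast
  then have "card (insert l (X \<inter> Y)) < n" using assms(5) by (simp add: card_insert_if)
  then obtain k' where k': "k' < n" "k' \<notin> insert l (X \<inter> Y)"
    using exists_less_notin[of "insert l (X \<inter> Y)"] assms(1) l(1) by blast
  show ?thesis
  proof (cases "k' \<in> X")
    case True
    obtain k where "k < n" "k \<notin> X" using exists_less_notin[OF assms(1,3)] .
    then show ?thesis using that[of k k'] True k' by auto
  next
    case False
    then show ?thesis using that[of k' l] k' l by auto
  qed
qed

lemma exists_generic_normals_vanishing:
  assumes rep: "qp_rep d H" and S: "S \<subseteq> {1..d}" "\<not> qp_dependent n d H S"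
    and sg: "inj_on sg S" "sg ` S \<subseteq> {..<n}"
  shows "\<exists>h :: label \<Rightarrow> nat \<Rightarrow> 'a::field_char_0.
    generic_normals n H h \<and> (\<forall>A\<in>H. \<forall>e\<in>S \<inter> A. h (Normal A) (sg e) = 0)"
proof -
  define L :: "(label \<Rightarrow> nat \<Rightarrow> 'a) set"
    where "L = {p. \<forall>A\<in>H. \<forall>e\<in>S \<inter> A. p (Normal A) (sg e) = 0}"
  have card_image: "card (sg ` (S \<inter> X)) = card (S \<inter> X)" for X
    by (intro card_image inj_on_subset[OF sg(1)]) auto
  have free: "card (sg ` (S \<inter> A)) < n" if "A \<in> H" for A
    using qp_independent_block_card[OF S that] card_image by simp
  have "\<exists>p\<in>L. generic_normals n H p"
  proof (rule exists_generic_normals)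
    show "finite H" using rep unfolding qp_rep_def by blast
    show "(\<lambda>_ _. 0) \<in> L" unfolding L_def by simp
    show "line p q t \<in> L" if "p \<in> L" "q \<in> L" for p q t using that by (simp add: L_def line_def)
    show "\<exists>p\<in>L. nonzero_vec n (p (Normal A))" if A: "A \<in> H" for A
    proof -
      obtain k where k: "k < n" "k \<notin> sg ` (S \<inter> A)"
        using exists_less_notin[OF _ free[OF A]] sg(2) by blast
      define p :: "label \<Rightarrow> nat \<Rightarrow> 'a" where "p l j = of_bool (l = Normal A \<and> j = k)" for l j
      have "p \<in> L" using k unfolding L_def p_def by auto
      moreover have "nonzero_vec n (p (Normal A))" using k unfolding nonzero_vec_def p_def by auto
      ultimately show ?thesis by blast
    qed
    show "\<exists>p\<in>L. indep_pair n (p (Normal A)) (p (Normal B))" if AB: "A \<in> H" "B \<in> H" "A \<noteq> B" for A B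
    proof -
      have "sg ` (S \<inter> A) \<inter> sg ` (S \<inter> B) = sg ` (S \<inter> A \<inter> B)"
        using inj_on_image_Int[OF sg(1), of "S \<inter> A" "S \<inter> B"] by (simp add: Int_ac)
      then have "card (sg ` (S \<inter> A) \<inter> sg ` (S \<inter> B)) + 1 < n"
        using qp_independent_two_blocks_card[OF S AB] card_image[of "A \<inter> B"] by (simp add: Int_assoc)
      then obtain k l where kl: "k < n" "l < n" "k \<notin> sg ` (S \<inter> A)" "l \<notin> sg ` (S \<inter> B)" "k \<noteq> l"
        using exists_distinct_less_notin[of "sg ` (S \<inter> A)" n "sg ` (S \<inter> B)"] sg(2) free AB by blast
      define p :: "label \<Rightarrow> nat \<Rightarrow> 'a"
        where "p m j = of_bool (m = Normal A \<and> j = k \<or> m = Normal B \<and> j = l)" for m j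
      have "p \<in> L" using kl unfolding L_def p_def by auto
      moreover have "indep_pair n (p (Normal A)) (p (Normal B))"
        unfolding indep_pair_def p_def using kl AB(3) by (intro exI[of _ k] exI[of _ l]) auto
      ultimately show ?thesis by blast
    qed
  qed
  then show ?thesis unfolding L_def by blast
qed

lemma exists_param_independent:
  assumes rep: "qp_rep d H" and S: "S \<subseteq> {1..d}" "\<not> qp_dependent n d H S"
  shows "\<exists>p :: label \<Rightarrow> nat \<Rightarrow> 'a::field_char_0.
    generic_normals n H p \<and> \<not> lin_dependent {..<n} (gamma n H p) S"
proof -
  have "finite S" using S(1) by (rule finite_subset) simp
  then obtain sg where "bij_betw sg S {0..<card S}" using ex_bij_betw_finite_nat by blast
  then have sg: "inj_on sg S" "sg ` S \<subseteq> {..<n}"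
    using qp_independent_card[OF S] by (auto simp: bij_betw_def)
  \<comment> \<open>send the members of S to distinct unit vectors, lying in the hyperplanes of their blocks\<close>
  obtain h :: "label \<Rightarrow> nat \<Rightarrow> 'a" where h: "generic_normals n H h" "\<forall>A\<in>H. \<forall>e\<in>S \<inter> A. h (Normal A) (sg e) = 0"
    using exists_generic_normals_vanishing[OF rep S sg] by blast
  have "dot n (h (Normal A)) (\<lambda>j. of_bool (j = sg e)) = 0" if "A \<in> H" "e \<in> A" "e \<in> S" for A e
    using h(2) that sg(2) by (auto simp: dot_unit_vector)
  then have "\<exists>p :: label \<Rightarrow> nat \<Rightarrow> 'a.
      generic_normals n H p \<and> (\<forall>e\<in>S. gamma n H p e = (\<lambda>j. of_bool (j = sg e)))"
    by (rule exists_param_with_points[OF h(1), where z = "\<lambda>e j. of_bool (j = sg e)"])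
  then obtain p :: "label \<Rightarrow> nat \<Rightarrow> 'a"
    where p: "generic_normals n H p" "\<forall>e\<in>S. gamma n H p e = (\<lambda>j. of_bool (j = sg e))"
    by blast
  have "\<not> lin_dependent {..<n} (\<lambda>e j. of_bool (j = sg e) :: 'a) S"
    using unit_vectors_independent[OF \<open>finite S\<close> sg] .
  then have "\<not> lin_dependent {..<n} (gamma n H p) S"
    using p(2) by (subst lin_dependent_cong[of S _ _ "\<lambda>e j. of_bool (j = sg e)"]) auto
  then show ?thesis using p(1) by blast
qed

definition good_param_conditions :: "nat \<Rightarrow> nat \<Rightarrow> nat set set \<Rightarrow> ((label \<Rightarrow> nat \<Rightarrow> 'a::field) \<Rightarrow> bool) set" where
  "good_param_conditions n d H = insert (generic_normals n H)
     ((\<lambda>S p. \<not> lin_dependent {..<n} (gamma n H p) S) ` {S. S \<subseteq> {1..d} \<and> \<not> qp_dependent n d H S})"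

lemma good_param_iff_conditions: "good_param n d H p \<longleftrightarrow> (\<forall>Q\<in>good_param_conditions n d H. Q p)"
  unfolding good_param_def good_param_conditions_def by auto

lemma finite_good_param_conditions: "finite (good_param_conditions n d H)"
proof -
  have "{S. S \<subseteq> {1..d} \<and> \<not> qp_dependent n d H S} \<subseteq> Pow {1..d}" by auto
  then have "finite {S. S \<subseteq> {1..d} \<and> \<not> qp_dependent n d H S}" by (rule finite_subset) simp
  then show ?thesis unfolding good_param_conditions_def by simp
qed

lemma open_on_lines_good_param_conditions:
  assumes "qp_rep d H" "Q \<in> good_param_conditions n d H"
  shows "open_on_lines Q"
proof -
  have "finite H" using assms(1) unfolding qp_rep_def by blast
  moreover have "open_on_lines (\<lambda>p. \<not> lin_dependent {..<n} (gamma n H p) S)" if "S \<subseteq> {1..d}" for S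
    using finite_subset[OF that] by (intro open_on_lines_independent) (simp_all add: poly_on_lines_gamma)
  ultimately show ?thesis
    using assms(2) open_on_lines_generic_normals unfolding good_param_conditions_def by auto
qed

lemma open_on_lines_good_param: "qp_rep d H \<Longrightarrow> open_on_lines (good_param n d H)"
  unfolding good_param_iff_conditions
  by (intro open_on_lines_Ball finite_good_param_conditions open_on_lines_good_param_conditions)

lemma exists_good_param:
  assumes rep: "qp_rep d H" and "\<not> qp_dependent n d H {}"
  obtains p :: "label \<Rightarrow> nat \<Rightarrow> 'a::field_char_0" where "good_param n d H p"
proof -
  have "\<exists>p. Q p" if Q: "Q \<in> good_param_conditions n d H" for Q :: "(label \<Rightarrow> nat \<Rightarrow> 'a) \<Rightarrow> bool"
  proof -
    have witness: "\<exists>p :: label \<Rightarrow> nat \<Rightarrow> 'a. generic_normals n H p \<and> \<not> lin_dependent {..<n} (gamma n H p) S"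
      if "S \<subseteq> {1..d}" "\<not> qp_dependent n d H S" for S
      by (rule exists_param_independent[OF rep that])
    consider "Q = generic_normals n H"
      | S where "S \<subseteq> {1..d}" "\<not> qp_dependent n d H S" "Q = (\<lambda>p. \<not> lin_dependent {..<n} (gamma n H p) S)"
      using Q unfolding good_param_conditions_def by (elim insertE imageE) auto
    then show ?thesis
    proof cases
      case 1
      then show ?thesis using witness[of "{}"] assms(2) by auto
    next
      case 2
      then show ?thesis using witness by auto
    qed
  qed
  then have "\<exists>p\<in>UNIV. \<forall>Q\<in>good_param_conditions n d H. Q (p :: label \<Rightarrow> nat \<Rightarrow> 'a)"
    by (intro exists_common_point finite_good_param_conditions open_on_lines_good_param_conditions[OF rep])
      auto
  then show ?thesis using that unfolding good_param_iff_conditions by blast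
qed

section \<open>Every realization is parametrized\<close>

context
  fixes n d :: nat and H :: "nat set set" and v :: "nat \<Rightarrow> nat \<Rightarrow> 'a::field_char_0"
  assumes rep: "qp_rep d H" and n: "1 \<le> n"
    and faithful: "\<And>S. S \<subseteq> {1..d} \<Longrightarrow> qp_dependent n d H S \<longleftrightarrow> lin_dependent {..<n} v S"
begin

lemma block_spanning_subset:
  assumes A: "A \<in> H"
  obtains I where "I \<subseteq> A" "finite I" "\<not> qp_dependent n d H I" "card I < n"
    "\<And>h. \<forall>i\<in>I. dot n h (v i) = 0 \<Longrightarrow> \<forall>e\<in>A. dot n h (v e) = 0"
proof -
  have "A \<subseteq> {1..d}" using rep A unfolding qp_rep_def by blast
  then have "finite A" by (rule finite_subset) simp
  then obtain I where I: "I \<subseteq> A" "\<not> lin_dependent {..<n} v I"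
    "\<And>h. \<forall>i\<in>I. dot n h (v i) = 0 \<Longrightarrow> \<forall>e\<in>A. dot n h (v e) = 0"
    using exists_spanning_independent_subset by blast
  have "I \<subseteq> {1..d}" using I(1) \<open>A \<subseteq> {1..d}\<close> by blast
  then have "\<not> qp_dependent n d H I" using faithful I(2) by blast
  moreover have "card I < n"
    using qp_independent_block_card[OF \<open>I \<subseteq> {1..d}\<close> \<open>\<not> qp_dependent n d H I\<close> A] I(1)
    by (simp add: Int_absorb2)
  moreover have "finite I" using I(1) \<open>finite A\<close> by (rule finite_subset)
  ultimately show ?thesis using that I by blast
qed

lemma exists_block_normal:
  assumes "A \<in> H"
  obtains h where "nonzero_vec n h" "\<forall>e\<in>A. dot n h (v e) = 0"
proof -
  obtain I where I: "finite I" "card I < n" "\<And>h. \<forall>i\<in>I. dot n h (v i) = 0 \<Longrightarrow> \<forall>e\<in>A. dot n h (v e) = 0"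
    using block_spanning_subset[OF assms] by metis
  obtain h where "nonzero_vec n h" "\<forall>i\<in>I. dot n h (v i) = 0"
    using exists_normal[OF I(1,2)] by blast
  then show ?thesis using that I(3) by blast
qed

lemma no_common_normal_of_full_blocks:
  assumes AB: "A \<in> H" "B \<in> H" "A \<noteq> B"
    and u: "nonzero_vec n u" "\<forall>e\<in>A. dot n u (v e) = 0" "\<forall>e\<in>B. dot n u (v e) = 0"
    and IA: "IA \<subseteq> A" "finite IA" "\<not> qp_dependent n d H IA" "card IA = n - 1"
    and IB: "IB \<subseteq> B" "\<not> qp_dependent n d H IB" "card IB = n - 1"
  shows False
proof -
  obtain e where e: "e \<in> IB" "e \<notin> A" "\<not> qp_dependent n d H (insert e IA)"
    using qp_independent_insert_from_other_block[OF rep AB n IA(1,3,4) IB] by blast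
  have "card (insert e IA) = n" using e(2) IA(1,2,4) n by (auto simp: card_insert_if)
  moreover have "\<forall>i\<in>insert e IA. dot n u (v i) = 0" using u(2,3) e(1) IA(1) IB(1) by blast
  ultimately have "lin_dependent {..<n} v (insert e IA)"
    using IA(2) u(1) by (intro lin_dependent_in_hyperplane) auto
  moreover have "A \<subseteq> {1..d}" "B \<subseteq> {1..d}" using rep AB(1,2) unfolding qp_rep_def by simp_all
  then have "insert e IA \<subseteq> {1..d}" using e(1) IA(1) IB(1) by blast
  ultimately show False using faithful e(3) by blast
qed

lemma exists_block_normals_indep:
  assumes AB: "A \<in> H" "B \<in> H" "A \<noteq> B"
  obtains u w where "indep_pair n u w" "\<forall>e\<in>A. dot n u (v e) = 0" "\<forall>e\<in>B. dot n w (v e) = 0"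
proof -
  obtain IA where IA: "IA \<subseteq> A" "finite IA" "\<not> qp_dependent n d H IA" "card IA < n"
    "\<And>h. \<forall>i\<in>IA. dot n h (v i) = 0 \<Longrightarrow> \<forall>e\<in>A. dot n h (v e) = 0"
    using block_spanning_subset[OF AB(1)] by metis
  obtain IB where IB: "IB \<subseteq> B" "finite IB" "\<not> qp_dependent n d H IB" "card IB < n"
    "\<And>h. \<forall>i\<in>IB. dot n h (v i) = 0 \<Longrightarrow> \<forall>e\<in>B. dot n h (v e) = 0"
    using block_spanning_subset[OF AB(2)] by metis
  obtain u where u: "nonzero_vec n u" "\<forall>e\<in>A. dot n u (v e) = 0" using exists_block_normal[OF AB(1)] .
  obtain w where w: "nonzero_vec n w" "\<forall>e\<in>B. dot n w (v e) = 0" using exists_block_normal[OF AB(2)] .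
  consider "card IA + 1 < n" | "card IB + 1 < n" | "card IA = n - 1" "card IB = n - 1"
    using IA(4) IB(4) by linarith
  then show ?thesis
  proof cases
    case 1
    then obtain u' where "indep_pair n u' w" "\<forall>i\<in>IA. dot n u' (v i) = 0"
      using exists_normal_indep_of[OF IA(2) _ w(1)] by blast
    then show ?thesis using that IA(5) w(2) by blast
  next
    case 2
    then obtain w' where "indep_pair n w' u" "\<forall>i\<in>IB. dot n w' (v i) = 0"
      using exists_normal_indep_of[OF IB(2) _ u(1)] by blast
    then show ?thesis using that IB(5) u(2) indep_pair_commute by blast
  next
    case 3
    show ?thesis
    proof (cases "indep_pair n u w")
      case True
      then show ?thesis using that u(2) w(2) by blast
    next
      case False
      then obtain a where "\<And>j. j < n \<Longrightarrow> u j = a * w j" using not_indep_pair_scale[OF w(1)] by blast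
      then have "dot n u (v e) = a * dot n w (v e)" for e by (rule dot_scale)
      then have "\<forall>e\<in>B. dot n u (v e) = 0" using w(2) by simp
      then have False
        by (rule no_common_normal_of_full_blocks[OF AB u(1,2) _ IA(1,2,3) 3(1) IB(1,3) 3(2)])
      then show ?thesis ..
    qed
  qed
qed

lemma exists_param_realizing:
  "\<exists>p :: label \<Rightarrow> nat \<Rightarrow> 'a. generic_normals n H p \<and> (\<forall>e. gamma n H p e = v e)"
proof -
  define L :: "(label \<Rightarrow> nat \<Rightarrow> 'a) set"
    where "L = {p. \<forall>A\<in>H. \<forall>e\<in>A. dot n (p (Normal A)) (v e) = 0}"
  have "\<exists>p\<in>L. generic_normals n H p"
  proof (rule exists_generic_normals)
    show "finite H" using rep unfolding qp_rep_def by blast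
    show "(\<lambda>_ _. 0) \<in> L" unfolding L_def by (simp add: dot_def)
    show "line p q t \<in> L" if "p \<in> L" "q \<in> L" for p q t
      using that by (simp add: L_def line_def dot_affine)
    show "\<exists>p\<in>L. nonzero_vec n (p (Normal A))" if A: "A \<in> H" for A
    proof -
      obtain h where h: "nonzero_vec n h" "\<forall>e\<in>A. dot n h (v e) = 0" using exists_block_normal[OF A] .
      define p :: "label \<Rightarrow> nat \<Rightarrow> 'a" where "p l = (if l = Normal A then h else (\<lambda>_. 0))" for l
      have "p \<in> L" using h(2) unfolding L_def p_def by (simp add: dot_def)
      moreover have "nonzero_vec n (p (Normal A))" using h(1) by (simp add: p_def)
      ultimately show ?thesis by blast
    qed
    show "\<exists>p\<in>L. indep_pair n (p (Normal A)) (p (Normal B))" if AB: "A \<in> H" "B \<in> H" "A \<noteq> B" for A B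
    proof -
      obtain u w where uw: "indep_pair n u w" "\<forall>e\<in>A. dot n u (v e) = 0" "\<forall>e\<in>B. dot n w (v e) = 0"
        using exists_block_normals_indep[OF AB] .
      define p :: "label \<Rightarrow> nat \<Rightarrow> 'a"
        where "p l = (if l = Normal A then u else if l = Normal B then w else (\<lambda>_. 0))" for l
      have "p \<in> L" using uw(2,3) AB(3) unfolding L_def p_def by (simp add: dot_def)
      moreover have "indep_pair n (p (Normal A)) (p (Normal B))" using uw(1) AB(3) by (simp add: p_def)
      ultimately show ?thesis by blast
    qed
  qed
  then obtain h where h: "h \<in> L" "generic_normals n H h" by blast
  have "\<exists>p :: label \<Rightarrow> nat \<Rightarrow> 'a. generic_normals n H p \<and> (\<forall>e\<in>UNIV. gamma n H p e = v e)"
    using h(1) unfolding L_def by (intro exists_param_with_points[OF h(2)]) auto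
  then show ?thesis by simp
qed

end

lemma realization_eq_realization_of:
  assumes rep: "qp_rep d H" and "1 \<le> n" and x: "x \<in> qp_realizations n d H"
  obtains p where "good_param n d H p" "realization_of n d H p = x"
proof -
  have faithful: "qp_dependent n d H S \<longleftrightarrow> lin_dependent {..<n} (\<lambda>e j. x (e, j)) S"
    if "S \<subseteq> {1..d}" for S
    using x that unfolding qp_realizations_def lin_dep_family_iff_lin_dependent by blast
  obtain p where p: "generic_normals n H p" "\<And>e. gamma n H p e = (\<lambda>j. x (e, j))"
    using exists_param_realizing[OF rep assms(2) faithful] by blast
  have "gamma n H p = (\<lambda>e j. x (e, j))" using p(2) by (intro ext) simp
  then have "good_param n d H p"
    unfolding good_param_def using p(1) faithful by simp
  moreover have "realization_of n d H p = x"
  proof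
    fix k :: "nat \<times> nat"
    show "realization_of n d H p k = x k"
      using x p(2) unfolding qp_realizations_def cspace_def realization_of_def by (cases k) auto
  qed
  ultimately show ?thesis by (rule that)
qed

lemma qp_realizations_eq_image:
  assumes "qp_rep d H" "1 \<le> n" "\<not> qp_dependent n d H {}"
  shows "qp_realizations n d H = realization_of n d H ` Collect (good_param n d H)"
  using good_param_realization[OF assms(1,3)] realization_eq_realization_of[OF assms(1,2)]
  by blast

theorem corollary3p9:
  fixes n d :: nat and H :: "nat set set"
  assumes "1 \<le> n" and "n \<le> d"
    and "qp_rep d H"
    and "qp_matroid_rank_n n d H"
  shows "qp_realizations n d H \<noteq> {} \<and>
         zariski_irreducible (idx n d) (matroid_variety n d H)"
proof -
  have "circuit_matroid {1..d} (qp_circuit n d H)" using assms(4) unfolding qp_matroid_rank_n_def ..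
  then have no_loops: "\<not> qp_dependent n d H {}" unfolding circuit_matroid_def qp_dependent_def by simp
  obtain p0 :: "label \<Rightarrow> nat \<Rightarrow> complex" where p0: "good_param n d H p0"
    using exists_good_param[OF assms(3) no_loops] by blast
  have realizations: "qp_realizations n d H = realization_of n d H ` Collect (good_param n d H)"
    by (rule qp_realizations_eq_image[OF assms(3,1) no_loops])
  have "zariski_irreducible (idx n d)
      (zariski_closure (idx n d) (realization_of n d H ` Collect (good_param n d H)))"
    by (rule zariski_irreducible_closure_image[OF open_on_lines_good_param[OF assms(3)] p0])
      (simp_all add: poly_on_lines_realization_of realization_of_cspace)
  then show ?thesis
    using p0 unfolding matroid_variety_def realizations by blast
qed

end
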